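(* Let $1\le q<2$ and let $C_q$ and $\mathbf{T}_1$ be as in the context. If $\mathbf{y}\in\mathbb{R}^d\setminus\{\mathbf{x}_1,\dots,\mathbf{x}_m\}$, then $C_q(\mathbf{T}_1(\mathbf{y}))\le C_q(\mathbf{y})$, with equality only when $\mathbf{T}_1(\mathbf{y})=\mathbf{y}$.
   Context: Let $\mathbf{x}_1,\dots,\mathbf{x}_m\in\mathbb{R}^d$ be distinct data points, not all lying on a common affine line, and let $\eta_1,\dots,\eta_m>0$ be weights. For $1\le q<2$ define the cost $C_q(\mathbf{y})=\sum_{i=1}^m \eta_i^q\|\mathbf{y}-\mathbf{x}_i\|^q$ ($\|\cdot\|$ the Euclidean norm); it is strictly convex with a unique minimizer $\mathbf{M}$. For $\mathbf{y}\notin\{\mathbf{x}_i\}_{i=1}^m$ define the Weiszfeld map $\mathbf{T}_1(\mathbf{y})=\dfrac{\sum_{i=1}^m \eta_i^q\|\mathbf{y}-\mathbf{x}_i\|^{q-2}\mathbf{x}_i}{\sum_{i=1}^m \eta_i^q\|\mathbf{y}-\mathbf{x}_i\|^{q-2}}$. *)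

theory Defs
  imports "HOL-Analysis.Analysis"
begin

definition cost_q :: "real \<Rightarrow> nat \<Rightarrow> (nat \<Rightarrow> 'a::euclidean_space) \<Rightarrow> (nat \<Rightarrow> real) \<Rightarrow> 'a \<Rightarrow> real" where
  "cost_q q m x eta y = (\<Sum>i<m. (eta i powr q) * (norm (y - x i) powr q))"

text \<open>Weiszfeld map T_1 (meaningful for y not among the data points).\<close>
definition weiszfeld_T1 :: "real \<Rightarrow> nat \<Rightarrow> (nat \<Rightarrow> 'a::euclidean_space) \<Rightarrow> (nat \<Rightarrow> real) \<Rightarrow> 'a \<Rightarrow> 'a" where
  "weiszfeld_T1 q m x eta y =
     (\<Sum>i<m. ((eta i powr q) * (norm (y - x i) powr (q - 2))) *\<^sub>R x i) /\<^sub>R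
     (\<Sum>i<m. (eta i powr q) * (norm (y - x i) powr (q - 2)))"

end

theory Submission
  imports Defs
begin

text \<open>Majorisation--minimisation: since \<open>s \<mapsto> s powr (q/2)\<close> is concave for \<open>q \<le> 2\<close>, each term
  \<open>\<eta>\<^sub>i\<^sup>q \<parallel>z - x\<^sub>i\<parallel>\<^sup>q\<close> lies below its tangent in the variable \<open>\<parallel>z - x\<^sub>i\<parallel>\<^sup>2\<close> at \<open>z = y\<close>.
  Summing gives a quadratic majorant of \<open>C\<^sub>q\<close> touching it at \<open>y\<close>, whose minimiser is exactly the
  weighted mean \<open>T\<^sub>1(y)\<close>, and at which it equals \<open>C\<^sub>q(y) - (q/2) W \<parallel>T\<^sub>1(y) - y\<parallel>\<^sup>2\<close>,
  \<open>W\<close> being the (positive) sum of the Weiszfeld weights.\<close>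

lemma powr_le_tangent:
  fixes a b p :: real
  assumes "0 < p" "p \<le> 1" "0 \<le> a" "0 < b"
  shows "a powr p \<le> b powr p + p * b powr (p - 1) * (a - b)"
proof -
  have b_powr: "b * b powr (p - 1) = b powr p"
    using assms by (simp add: powr_diff)
  show ?thesis
  proof (cases "a = 0")
    case True
    have "0 \<le> (1 - p) * b powr p" using assms by simp
    then show ?thesis using True b_powr by (simp add: algebra_simps)
  next
    case False
    have young: "a powr p * b powr (1 - p) \<le> p * a + (1 - p) * b"
      using Youngs_inequality_0[of p "1 - p" a b] assms False by simp
    have "a powr p = (a powr p * b powr (1 - p)) * b powr (p - 1)"
      using assms by (simp add: mult.assoc flip: powr_add)
    also have "\<dots> \<le> (p * a + (1 - p) * b) * b powr (p - 1)"
      using young assms by (simp add: mult_right_mono)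
    also have "\<dots> = b powr p + p * b powr (p - 1) * (a - b)"
      using b_powr by (simp add: algebra_simps)
    finally show ?thesis .
  qed
qed

lemma powr_le_quadratic_majorant:
  fixes t d q :: real
  assumes "0 < q" "q \<le> 2" "0 \<le> t" "0 < d"
  shows "t powr q \<le> d powr q + (q / 2) * d powr (q - 2) * (t\<^sup>2 - d\<^sup>2)"
proof -
  have sq: "z\<^sup>2 = z powr 2" if "0 \<le> z" for z :: real
    using powr_realpow'[of z 2] that by simp
  have t: "(t\<^sup>2) powr (q / 2) = t powr q"
    unfolding sq[OF assms(3)] powr_powr by simp
  have d: "(d\<^sup>2) powr (q / 2) = d powr q"
    unfolding sq[OF less_imp_le[OF assms(4)]] powr_powr by simp
  have d': "(d\<^sup>2) powr (q / 2 - 1) = d powr (q - 2)"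
    unfolding sq[OF less_imp_le[OF assms(4)]] powr_powr by (simp add: algebra_simps)
  have "(t\<^sup>2) powr (q / 2) \<le> (d\<^sup>2) powr (q / 2) + (q / 2) * (d\<^sup>2) powr (q / 2 - 1) * (t\<^sup>2 - d\<^sup>2)"
    by (rule powr_le_tangent) (use assms in auto)
  then show ?thesis unfolding t d d' .
qed

lemma sum_weighted_sqdist_diff_barycenter:
  fixes w :: "'i \<Rightarrow> real" and x :: "'i \<Rightarrow> 'a::real_inner"
  assumes barycenter: "(\<Sum>i\<in>I. w i) *\<^sub>R c = (\<Sum>i\<in>I. w i *\<^sub>R x i)"
  shows "(\<Sum>i\<in>I. w i * ((norm (c - x i))\<^sup>2 - (norm (y - x i))\<^sup>2))
           = - (\<Sum>i\<in>I. w i) * (norm (c - y))\<^sup>2"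
proof -
  define W where "W = (\<Sum>i\<in>I. w i)"
  have expand: "(norm (c - x i))\<^sup>2 - (norm (y - x i))\<^sup>2
                  = (norm (c - y))\<^sup>2 + 2 * ((c - y) \<bullet> (y - x i))" for i
    using dot_norm[of "c - y" "y - x i"] by simp
  have "(\<Sum>i\<in>I. w i * ((norm (c - x i))\<^sup>2 - (norm (y - x i))\<^sup>2))
          = (\<Sum>i\<in>I. w i * (norm (c - y))\<^sup>2 + 2 * ((c - y) \<bullet> (w i *\<^sub>R (y - x i))))"
    by (rule sum.cong) (simp_all add: expand algebra_simps)
  also have "\<dots> = W * (norm (c - y))\<^sup>2 + 2 * ((c - y) \<bullet> (\<Sum>i\<in>I. w i *\<^sub>R (y - x i)))"
    unfolding sum.distrib W_def sum_distrib_right inner_sum_right sum_distrib_left ..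
  also have "(\<Sum>i\<in>I. w i *\<^sub>R (y - x i)) = - (W *\<^sub>R (c - y))"
    using barycenter
    by (simp add: W_def scaleR_diff_right sum_subtractf scaleR_sum_left)
  finally show ?thesis by (simp add: W_def power2_norm_eq_inner)
qed

lemma cost_q_weiszfeld_T1_descent:
  fixes x :: "nat \<Rightarrow> 'a::euclidean_space"
  assumes "0 < q" "q \<le> 2"
    and eta_pos: "\<And>i. i < m \<Longrightarrow> 0 < eta i"
    and y_notin: "y \<notin> x ` {..<m}"
  defines "w \<equiv> \<lambda>i. eta i powr q * norm (y - x i) powr (q - 2)"
      and "T \<equiv> weiszfeld_T1 q m x eta y"
  shows "cost_q q m x eta T + (q / 2) * (\<Sum>i<m. w i) * (norm (T - y))\<^sup>2 \<le> cost_q q m x eta y"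
proof -
  have dist_pos: "0 < norm (y - x i)" if "i < m" for i
    using y_notin that by auto
  have "(\<Sum>i<m. w i) *\<^sub>R T = (\<Sum>i<m. w i *\<^sub>R x i)"
  proof (cases "m = 0")
    case False
    have "0 < w i" if "i < m" for i
      using dist_pos[OF that] eta_pos[OF that] by (simp add: w_def)
    with False have "0 < (\<Sum>i<m. w i)" by (intro sum_pos) auto
    then show ?thesis by (simp add: T_def weiszfeld_T1_def w_def)
  qed simp
  then have barycenter:
      "(\<Sum>i<m. w i * ((norm (T - x i))\<^sup>2 - (norm (y - x i))\<^sup>2)) = - (\<Sum>i<m. w i) * (norm (T - y))\<^sup>2"
    by (rule sum_weighted_sqdist_diff_barycenter)
  have term_bound: "eta i powr q * norm (T - x i) powr q
      \<le> eta i powr q * norm (y - x i) powr q + (q / 2) * (w i * ((norm (T - x i))\<^sup>2 - (norm (y - x i))\<^sup>2))"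
    if "i < m" for i
  proof -
    have "eta i powr q * norm (T - x i) powr q
        \<le> eta i powr q * (norm (y - x i) powr q
             + (q / 2) * norm (y - x i) powr (q - 2) * ((norm (T - x i))\<^sup>2 - (norm (y - x i))\<^sup>2))"
      using powr_le_quadratic_majorant[OF assms(1,2) norm_ge_zero dist_pos[OF that]]
      by (intro mult_left_mono) auto
    then show ?thesis by (simp add: w_def algebra_simps)
  qed
  have "cost_q q m x eta T \<le> (\<Sum>i<m. eta i powr q * norm (y - x i) powr q
          + (q / 2) * (w i * ((norm (T - x i))\<^sup>2 - (norm (y - x i))\<^sup>2)))"
    unfolding cost_q_def by (rule sum_mono) (use term_bound in auto)
  also have "\<dots> = cost_q q m x eta y - (q / 2) * (\<Sum>i<m. w i) * (norm (T - y))\<^sup>2"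
    unfolding cost_q_def sum.distrib sum_distrib_left[symmetric] barycenter by simp
  finally show ?thesis by simp
qed

text \<open>Of the non-collinearity hypothesis only \<open>m > 0\<close> is needed (for \<open>m = 0\<close> the map is the
  junk value \<open>0 /\<^sub>R 0 = 0\<close>); distinctness of the data points is not used.\<close>

theorem theorem1:
  fixes q :: real and m :: nat and x :: "nat \<Rightarrow> 'a::euclidean_space"
    and eta :: "nat \<Rightarrow> real" and y :: 'a
  assumes q1: "1 \<le> q" and q2: "q < 2"
    and distinct: "inj_on x {..<m}"
    and noncollinear: "\<not> collinear (x ` {..<m})"
    and eta_pos: "\<And>i. i < m \<Longrightarrow> 0 < eta i"
    and y_notin: "y \<notin> x ` {..<m}"
  shows "cost_q q m x eta (weiszfeld_T1 q m x eta y) \<le> cost_q q m x eta y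
         \<and> (cost_q q m x eta (weiszfeld_T1 q m x eta y) = cost_q q m x eta y
              \<longrightarrow> weiszfeld_T1 q m x eta y = y)"
proof -
  define T where "T = weiszfeld_T1 q m x eta y"
  define W where "W = (\<Sum>i<m. eta i powr q * norm (y - x i) powr (q - 2))"
  have "m \<noteq> 0" using noncollinear by (metis collinear_empty image_empty lessThan_0)
  moreover have "0 < eta i powr q * norm (y - x i) powr (q - 2)" if "i < m" for i
  proof -
    have "y \<noteq> x i" using y_notin that by blast
    then show ?thesis using eta_pos[OF that] by simp
  qed
  ultimately have W_pos: "0 < W" unfolding W_def by (intro sum_pos) auto
  have descent: "cost_q q m x eta T + (q / 2) * W * (norm (T - y))\<^sup>2 \<le> cost_q q m x eta y"
    unfolding T_def W_def using q1 q2 eta_pos y_notin by (intro cost_q_weiszfeld_T1_descent) auto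
  have "0 \<le> (q / 2) * W * (norm (T - y))\<^sup>2" using q1 W_pos by simp
  moreover have "T = y" if "(q / 2) * W * (norm (T - y))\<^sup>2 \<le> 0"
    using that q1 W_pos by (simp add: mult_le_0_iff)
  ultimately show ?thesis using descent unfolding T_def[symmetric] by force
qed

end
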